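(* Let $n\geq 3$. If $T\in\mathcal{T}_n$ is a star triangulation, then $\chi(\mathrm{KG}(\mathcal{T}_n\setminus\{T\}))\leq n-3$.
   Context: Label the vertices of a convex $n$-gon by $1,\dots,n$ in cyclic order; $\mathrm{Diag}_n = \{\{i,j\} \subseteq [n]: i-j\not\equiv \pm1 \pmod n\}$; a triangulation is identified with its set of diagonals, and $\mathcal{T}_n$ is the set of triangulations. For a set system $\mathcal{F}$, $\mathrm{KG}(\mathcal{F})$ is the graph on $\mathcal{F}$ with $F,F'$ adjacent iff $F\cap F'=\emptyset$. A star triangulation is one consisting of the $n-3$ diagonals emanating from a single vertex. *)

theory Defs
  imports Main
begin

text \<open>Vertices of the convex n-gon are 1..n in cyclic order. Diagonals are
  2-element sets {i,j} of vertices that are not cyclically adjacent.\<close>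
definition Diag :: "nat \<Rightarrow> nat set set" where
  "Diag n = {{i, j} | i j. i \<in> {1..n} \<and> j \<in> {1..n} \<and> i \<noteq> j \<and>
      (int i - int j) mod int n \<noteq> 1 mod int n \<and>
      (int i - int j) mod int n \<noteq> (-1) mod int n}"

text \<open>Two diagonals cross iff their endpoints strictly interleave in the cyclic
  (equivalently, linear) order of the labels.\<close>
definition crosses :: "nat set \<Rightarrow> nat set \<Rightarrow> bool" where
  "crosses D E \<longleftrightarrow>
     (\<exists>a b c d. D = {a, b} \<and> E = {c, d} \<and> a < c \<and> c < b \<and> b < d) \<or>
     (\<exists>a b c d. E = {a, b} \<and> D = {c, d} \<and> a < c \<and> c < b \<and> b < d)"

definition noncrossing :: "nat set set \<Rightarrow> bool" where
  "noncrossing S \<longleftrightarrow> (\<forall>D\<in>S. \<forall>E\<in>S. \<not> crosses D E)"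

text \<open>A triangulation (as its set of diagonals) is a maximal set of pairwise
  non-crossing diagonals.\<close>
definition triangulations :: "nat \<Rightarrow> nat set set set" where
  "triangulations n = {S. S \<subseteq> Diag n \<and> noncrossing S \<and>
      (\<forall>D \<in> Diag n - S. \<not> noncrossing (insert D S))}"

definition star_triangulation :: "nat \<Rightarrow> nat set set \<Rightarrow> bool" where
  "star_triangulation n T \<longleftrightarrow> T \<in> triangulations n \<and>
      (\<exists>v \<in> {1..n}. T = {D \<in> Diag n. v \<in> D})"

definition KG_adj :: "'a set \<Rightarrow> 'a set \<Rightarrow> bool" where
  "KG_adj F F' \<longleftrightarrow> F \<inter> F' = {}"

definition chromatic_number :: "'v set \<Rightarrow> ('v \<Rightarrow> 'v \<Rightarrow> bool) \<Rightarrow> nat" where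
  "chromatic_number V adj = (LEAST k. \<exists>c :: 'v \<Rightarrow> nat.
      (\<forall>x\<in>V. c x < k) \<and> (\<forall>x\<in>V. \<forall>y\<in>V. adj x y \<longrightarrow> c x \<noteq> c y))"

end

theory Submission
  imports Defs
begin

(* Rotate the labels so that the centre v of the star gets label 0. A triangulation other
   than the star has a diagonal avoiding v; let {a, b} be a shortest one, with rotated labels
   k < l. A diagonal crossing the ear {k, k + 2} must leave from k + 1, so it either crosses
   {a, b} or is shorter than it; hence by maximality the ear belongs to the triangulation.
   Colouring each triangulation by k - 1 uses the n - 3 colours 0, ..., n - 4, and two
   triangulations of the same colour share their ear, so they are not adjacent. *)

definition strictly_between :: "nat \<Rightarrow> nat \<Rightarrow> nat \<Rightarrow> bool" where
  "strictly_between x y z \<longleftrightarrow> min x y < z \<and> z < max x y"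

(* Unlike crosses, this form is visibly invariant under rotating the labels
   (chords_cross_rot_iff). *)
definition chords_cross :: "nat \<Rightarrow> nat \<Rightarrow> nat \<Rightarrow> nat \<Rightarrow> bool" where
  "chords_cross a b c d \<longleftrightarrow> distinct [a, b, c, d] \<and>
     (strictly_between a b c \<longleftrightarrow> \<not> strictly_between a b d)"

lemma crosses_doubleton_iff: "crosses {a, b} {c, d} \<longleftrightarrow> chords_cross a b c d"
proof
  assume "crosses {a, b} {c, d}"
  then show "chords_cross a b c d"
    unfolding crosses_def chords_cross_def strictly_between_def doubleton_eq_iff by auto
next
  assume "chords_cross a b c d"
  then have "(min a b < min c d \<and> min c d < max a b \<and> max a b < max c d) \<or>
             (min c d < min a b \<and> min a b < max c d \<and> max c d < max a b)"
    unfolding chords_cross_def strictly_between_def by (auto simp: min_def max_def)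
  moreover have "{a, b} = {min a b, max a b}" "{c, d} = {min c d, max c d}"
    by (auto simp: min_def max_def)
  ultimately show "crosses {a, b} {c, d}"
    unfolding crosses_def by metis
qed

lemma crosses_sym: "crosses D E \<longleftrightarrow> crosses E D"
  unfolding crosses_def by blast

lemma not_crosses_self: "\<not> crosses D D"
  unfolding crosses_def doubleton_eq_iff by auto

definition rot :: "nat \<Rightarrow> nat \<Rightarrow> nat \<Rightarrow> nat" where
  "rot n v x = (x + n - v) mod n"

lemma rot_eq:
  assumes "v \<in> {1..n}" "x \<in> {1..n}"
  shows "rot n v x = (if v \<le> x then x - v else x + n - v)"
proof (cases "v \<le> x")
  case True
  then have "rot n v x = (x - v + n) mod n" by (simp add: rot_def)
  also have "\<dots> = (x - v) mod n" by simp
  also have "\<dots> = x - v" using assms by (intro mod_less) auto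
  finally show ?thesis using True by simp
qed (use assms in \<open>simp add: rot_def\<close>)

lemma rot_less: "v \<in> {1..n} \<Longrightarrow> x \<in> {1..n} \<Longrightarrow> rot n v x < n"
  by (auto simp: rot_eq)

lemma rot_eq_0_iff: "v \<in> {1..n} \<Longrightarrow> x \<in> {1..n} \<Longrightarrow> rot n v x = 0 \<longleftrightarrow> x = v"
  by (simp add: rot_eq)

lemma rot_eq_iff:
  "v \<in> {1..n} \<Longrightarrow> x \<in> {1..n} \<Longrightarrow> y \<in> {1..n} \<Longrightarrow> rot n v x = rot n v y \<longleftrightarrow> x = y"
  by (auto simp: rot_eq split: if_splits)

lemma rot_surj:
  assumes "v \<in> {1..n}" "k < n"
  obtains x where "x \<in> {1..n}" "rot n v x = k"
proof
  let ?x = "if v + k \<le> n then v + k else v + k - n"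
  show x: "?x \<in> {1..n}" using assms by auto
  show "rot n v ?x = k" using rot_eq[OF assms(1) x] assms by auto
qed

lemma strictly_between_rot_iff:
  assumes "v \<in> {1..n}" "a \<in> {1..n}" "b \<in> {1..n}" "c \<in> {1..n}" "c \<noteq> a" "c \<noteq> b"
  shows "strictly_between (rot n v a) (rot n v b) (rot n v c) \<longleftrightarrow>
           ((v \<le> a) = (v \<le> b) \<longleftrightarrow> strictly_between a b c)"
  using assms unfolding strictly_between_def
  by (cases "v \<le> a"; cases "v \<le> b"; cases "v \<le> c"; simp add: rot_eq min_def max_def; linarith)

lemma chords_cross_rot_iff:
  assumes "v \<in> {1..n}" "a \<in> {1..n}" "b \<in> {1..n}" "c \<in> {1..n}" "d \<in> {1..n}"
  shows "chords_cross (rot n v a) (rot n v b) (rot n v c) (rot n v d) \<longleftrightarrow> chords_cross a b c d"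
  using assms rot_eq_iff[OF assms(1)] strictly_between_rot_iff[OF assms(1-3)]
  unfolding chords_cross_def by (auto simp: rot_eq_iff)

lemma mod_uminus_eq_iff: "(- x) mod m = y mod m \<longleftrightarrow> x mod m = (- y) mod (m :: int)"
  by (simp add: mod_eq_dvd_iff) (metis add.commute diff_minus_eq_add dvd_minus_iff minus_diff_eq)

lemma Diag_doubleton_iff:
  "{a, b} \<in> Diag n \<longleftrightarrow> a \<in> {1..n} \<and> b \<in> {1..n} \<and> a \<noteq> b \<and>
     (int a - int b) mod int n \<noteq> 1 mod int n \<and> (int a - int b) mod int n \<noteq> (-1) mod int n"
proof
  assume "{a, b} \<in> Diag n"
  then obtain i j where ij: "{a, b} = {i, j}" "i \<in> {1..n}" "j \<in> {1..n}" "i \<noteq> j"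
    "(int i - int j) mod int n \<noteq> 1 mod int n" "(int i - int j) mod int n \<noteq> (-1) mod int n"
    unfolding Diag_def by blast
  moreover have "(int j - int i) mod int n \<noteq> 1 mod int n" "(int j - int i) mod int n \<noteq> (-1) mod int n"
    using ij(5,6) mod_uminus_eq_iff[of "int i - int j" "int n"] by auto
  ultimately show "a \<in> {1..n} \<and> b \<in> {1..n} \<and> a \<noteq> b \<and>
     (int a - int b) mod int n \<noteq> 1 mod int n \<and> (int a - int b) mod int n \<noteq> (-1) mod int n"
    by (auto simp: doubleton_eq_iff)
qed (unfold Diag_def, blast)

lemma Diag_elim:
  assumes "D \<in> Diag n"
  obtains a b where "D = {a, b}" "a \<in> {1..n}" "b \<in> {1..n}" "a \<noteq> b"
  using assms unfolding Diag_def by blast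

lemma int_rot: "v \<le> n \<Longrightarrow> int (rot n v x) = (int x - int v) mod int n"
proof -
  assume "v \<le> n"
  have "int (rot n v x) = int (x + n - v) mod int n" unfolding rot_def by (simp only: of_nat_mod)
  also have "int (x + n - v) = (int x - int v) + int n" using \<open>v \<le> n\<close> by simp
  finally show ?thesis by simp
qed

lemma diff_mod_rot:
  assumes "v \<le> n"
  shows "(int (rot n v a) - int (rot n v b)) mod int n = (int a - int b) mod int n"
  using assms by (simp add: int_rot mod_diff_eq)

lemma Diag_iff_rot:
  assumes v: "v \<in> {1..n}" and ab: "a \<in> {1..n}" "b \<in> {1..n}" and lt: "rot n v a < rot n v b"
  shows "{a, b} \<in> Diag n \<longleftrightarrow> rot n v b \<noteq> rot n v a + 1 \<and> rot n v b + 1 \<noteq> rot n v a + n"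
proof -
  define d where "d = int (rot n v b) - int (rot n v a)"
  have d: "0 < d" "d < int n" using lt rot_less[OF v ab(2)] unfolding d_def by auto
  have "(int a - int b) mod int n = (- d) mod int n"
    using diff_mod_rot[of v n a b] v unfolding d_def by simp
  also have "\<dots> = int n - d" using d by (simp add: zmod_zminus1_eq_if)
  finally have "(int a - int b) mod int n = int n - d" .
  moreover have "1 mod int n = 1" "(-1) mod int n = int n - 1" using d by (auto simp: zmod_zminus1_eq_if)
  moreover have "a \<noteq> b" using lt by auto
  ultimately show ?thesis using ab unfolding d_def Diag_doubleton_iff by auto
qed

lemma triangulation_memI:
  assumes T: "T \<in> triangulations n" and D: "D \<in> Diag n" "\<forall>E\<in>T. \<not> crosses D E"
  shows "D \<in> T"
proof (rule ccontr)
  assume "D \<notin> T"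
  moreover have "noncrossing (insert D T)"
    using T D not_crosses_self crosses_sym unfolding triangulations_def noncrossing_def by blast
  ultimately show False using T D unfolding triangulations_def by blast
qed

lemma triangulation_eq_noncrossing_superset:
  assumes "T \<in> triangulations n" "S \<subseteq> Diag n" "noncrossing S" "T \<subseteq> S"
  shows "T = S"
  using triangulation_memI[OF assms(1)] assms(2-4) unfolding noncrossing_def by blast

lemma triangulation_avoids_star_centre:
  assumes "T \<in> triangulations n" "{D \<in> Diag n. v \<in> D} \<in> triangulations n"
    and "T \<noteq> {D \<in> Diag n. v \<in> D}"
  shows "\<exists>D\<in>T. v \<notin> D"
proof (rule ccontr)
  assume "\<not> ?thesis"
  then have "T \<subseteq> {D \<in> Diag n. v \<in> D}" using assms(1) unfolding triangulations_def by blast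
  then show False
    using triangulation_eq_noncrossing_superset[OF assms(1)] assms(2,3)
    unfolding triangulations_def by blast
qed

lemma chords_cross_short_chord:
  assumes "chords_cross k (k + 2) x y"
  obtains "x = k + 1" "y < k \<or> k + 2 < y" | "y = k + 1" "x < k \<or> k + 2 < x"
proof -
  have "(x = k + 1 \<and> (y < k \<or> k + 2 < y)) \<or> (y = k + 1 \<and> (x < k \<or> k + 2 < x))"
    using assms unfolding chords_cross_def strictly_between_def by auto
  then show thesis using that by blast
qed

lemma chords_cross_from_inner:
  "k + 2 \<le> l \<Longrightarrow> y < k \<or> l < y \<Longrightarrow> chords_cross k l (k + 1) y"
  unfolding chords_cross_def strictly_between_def by auto

lemma ear_crosses_nothing:
  assumes v: "v \<in> {1..n}" and S: "S \<subseteq> Diag n" "noncrossing S"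
    and ab: "{a, b} \<in> S" "a \<in> {1..n}" "b \<in> {1..n}" "rot n v a + 2 \<le> rot n v b"
    and innermost: "\<And>c d. {c, d} \<in> S \<Longrightarrow> c \<in> {1..n} \<Longrightarrow> d \<in> {1..n} \<Longrightarrow>
        rot n v a < rot n v c \<Longrightarrow> rot n v c < rot n v d \<Longrightarrow> rot n v d \<le> rot n v b \<Longrightarrow> False"
    and f: "f \<in> {1..n}" "rot n v f = rot n v a + 2"
    and E: "E \<in> S"
  shows "\<not> crosses {a, f} E"
proof
  let ?r = "rot n v"
  assume cr: "crosses {a, f} E"
  obtain g h where gh: "E = {g, h}" "g \<in> {1..n}" "h \<in> {1..n}"
    using E S(1) Diag_elim by blast
  have "chords_cross (?r a) (?r a + 2) (?r g) (?r h)"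
    using cr chords_cross_rot_iff[OF v ab(2) f(1) gh(2,3)] f(2) gh(1)
    by (simp add: crosses_doubleton_iff)
  then have "\<exists>x y. E = {x, y} \<and> x \<in> {1..n} \<and> y \<in> {1..n} \<and>
      ?r x = ?r a + 1 \<and> (?r y < ?r a \<or> ?r a + 2 < ?r y)"
  proof (cases rule: chords_cross_short_chord)
    case 1
    then show ?thesis using gh by blast
  next
    case 2
    then show ?thesis using gh insert_commute[of g h "{}"] by blast
  qed
  then obtain x y where xy: "E = {x, y}" "x \<in> {1..n}" "y \<in> {1..n}"
      "?r x = ?r a + 1" "?r y < ?r a \<or> ?r a + 2 < ?r y"
    by blast
  show False
  proof (cases "?r y < ?r a \<or> ?r b < ?r y")
    case True
    then have "chords_cross (?r a) (?r b) (?r x) (?r y)"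
      using chords_cross_from_inner ab(4) xy(4) by simp
    then have "crosses {a, b} E"
      using chords_cross_rot_iff[OF v ab(2,3) xy(2,3)] xy(1) by (simp add: crosses_doubleton_iff)
    then show False using S(2) ab(1) E unfolding noncrossing_def by blast
  next
    case False
    then show False using innermost[of x y] xy E by auto
  qed
qed

definition ear :: "nat \<Rightarrow> nat \<Rightarrow> nat \<Rightarrow> nat set" where
  "ear n v k = {x \<in> {1..n}. rot n v x = k \<or> rot n v x = k + 2}"

lemma ear_eq:
  assumes "v \<in> {1..n}" "a \<in> {1..n}" "f \<in> {1..n}" "rot n v f = rot n v a + 2"
  shows "ear n v (rot n v a) = {a, f}"
proof -
  have "rot n v x = rot n v a + 2 \<longleftrightarrow> x = f" if "x \<in> {1..n}" for x
    using rot_eq_iff[OF assms(1) that assms(3)] assms(4) by simp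
  then show ?thesis using rot_eq_iff[OF assms(1) _ assms(2)] assms(2,3) unfolding ear_def by auto
qed

lemma shortest_diagonal_avoiding:
  assumes v: "v \<in> {1..n}" and "S \<subseteq> Diag n" "D \<in> S" "v \<notin> D"
  obtains a b where "{a, b} \<in> S" "a \<in> {1..n}" "b \<in> {1..n}" "0 < rot n v a" "rot n v a < rot n v b"
    "\<And>c d. {c, d} \<in> S \<Longrightarrow> c \<in> {1..n} \<Longrightarrow> d \<in> {1..n} \<Longrightarrow> 0 < rot n v c \<Longrightarrow>
       rot n v c < rot n v d \<Longrightarrow> rot n v b - rot n v a \<le> rot n v d - rot n v c"
proof -
  let ?r = "rot n v"
  define avoiding where "avoiding = (\<lambda>(a, b). {a, b} \<in> S \<and> a \<in> {1..n} \<and> b \<in> {1..n} \<and>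
      0 < ?r a \<and> ?r a < ?r b)"
  obtain i j where ij: "D = {i, j}" "i \<in> {1..n}" "j \<in> {1..n}" "i \<noteq> j"
    using assms(2,3) Diag_elim by blast
  then have "?r i \<noteq> ?r j" "0 < ?r i" "0 < ?r j"
    using assms(4) rot_eq_iff[OF v] rot_eq_0_iff[OF v] by auto
  then have "avoiding (i, j) \<or> avoiding (j, i)"
    using assms(3) ij unfolding avoiding_def by (auto simp: insert_commute)
  then obtain p where p: "avoiding p"
    "\<forall>q. avoiding q \<longrightarrow> (case p of (a, b) \<Rightarrow> ?r b - ?r a) \<le> (case q of (c, d) \<Rightarrow> ?r d - ?r c)"
    using ex_has_least_nat[where m = "\<lambda>(a, b). ?r b - ?r a"] by blast
  obtain a b where "p = (a, b)" by fastforce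
  with p have "avoiding (a, b)" "\<And>c d. avoiding (c, d) \<Longrightarrow> ?r b - ?r a \<le> ?r d - ?r c"
    by auto
  then show thesis unfolding avoiding_def by (intro that[of a b]) auto
qed

lemma triangulation_has_ear:
  assumes v: "v \<in> {1..n}" and T: "T \<in> triangulations n" and D: "D \<in> T" "v \<notin> D"
  shows "\<exists>k \<in> {1..n - 3}. ear n v k \<in> T"
proof -
  let ?r = "rot n v"
  have Tdiag: "T \<subseteq> Diag n" and nc: "noncrossing T"
    using T unfolding triangulations_def by auto
  obtain a b where ab: "{a, b} \<in> T" "a \<in> {1..n}" "b \<in> {1..n}" "0 < ?r a" "?r a < ?r b"
    and shortest: "\<And>c d. {c, d} \<in> T \<Longrightarrow> c \<in> {1..n} \<Longrightarrow> d \<in> {1..n} \<Longrightarrow> 0 < ?r c \<Longrightarrow>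
       ?r c < ?r d \<Longrightarrow> ?r b - ?r a \<le> ?r d - ?r c"
    using shortest_diagonal_avoiding[OF v Tdiag D] by blast
  have long: "?r a + 2 \<le> ?r b" using Diag_iff_rot[OF v ab(2,3,5)] ab(1,5) Tdiag by auto
  have "?r b < n" using rot_less[OF v ab(3)] .
  with long obtain f where f: "f \<in> {1..n}" "?r f = ?r a + 2"
    using rot_surj[OF v, of "?r a + 2"] by auto
  have "{a, f} \<in> Diag n"
    using Diag_iff_rot[OF v ab(2) f(1)] f(2) ab(4) long \<open>?r b < n\<close> by simp
  moreover have "\<forall>E\<in>T. \<not> crosses {a, f} E"
  proof
    fix E assume "E \<in> T"
    show "\<not> crosses {a, f} E"
    proof (rule ear_crosses_nothing[OF v Tdiag nc ab(1-3) long _ f \<open>E \<in> T\<close>])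
      fix c d assume "{c, d} \<in> T" "c \<in> {1..n}" "d \<in> {1..n}"
        and "?r a < ?r c" "?r c < ?r d" "?r d \<le> ?r b"
      then show False using shortest[of c d] ab(4) by auto
    qed
  qed
  ultimately have "{a, f} \<in> T" using triangulation_memI[OF T] by blast
  then show ?thesis
    using ear_eq[OF v ab(2) f] ab(4) long \<open>?r b < n\<close> by (intro bexI[of _ "?r a"]) auto
qed

lemma chromatic_number_le:
  assumes "\<And>x. x \<in> V \<Longrightarrow> c x < k" "\<And>x y. x \<in> V \<Longrightarrow> y \<in> V \<Longrightarrow> adj x y \<Longrightarrow> c x \<noteq> c y"
  shows "chromatic_number V adj \<le> k"
  unfolding chromatic_number_def using assms by (intro Least_le) blast

theorem lemma3p4:
  fixes n :: nat and T :: "nat set set"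
  assumes "n \<ge> 3"
    and "star_triangulation n T"
  shows "chromatic_number (triangulations n - {T}) KG_adj \<le> n - 3"
proof -
  obtain v where v: "v \<in> {1..n}" and T: "T \<in> triangulations n" "T = {D \<in> Diag n. v \<in> D}"
    using assms(2) unfolding star_triangulation_def by blast
  define ear_index where "ear_index X = (SOME k. k \<in> {1..n - 3} \<and> ear n v k \<in> X)" for X
  have ear_index: "ear_index X \<in> {1..n - 3} \<and> ear n v (ear_index X) \<in> X"
    if "X \<in> triangulations n - {T}" for X
  proof -
    have "\<exists>k \<in> {1..n - 3}. ear n v k \<in> X"
      using triangulation_has_ear[OF v] triangulation_avoids_star_centre T that by blast
    then show ?thesis unfolding ear_index_def Bex_def by (rule someI_ex)
  qed
  show ?thesis
  proof (rule chromatic_number_le[where c = "\<lambda>X. ear_index X - 1"])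
    fix X assume "X \<in> triangulations n - {T}"
    then show "ear_index X - 1 < n - 3" using ear_index by fastforce
  next
    fix X Y assume X: "X \<in> triangulations n - {T}" and Y: "Y \<in> triangulations n - {T}"
      and "KG_adj X Y"
    then have "ear_index X \<noteq> ear_index Y"
      using ear_index[OF X] ear_index[OF Y] unfolding KG_adj_def by auto
    then show "ear_index X - 1 \<noteq> ear_index Y - 1" using ear_index[OF X] ear_index[OF Y] by auto
  qed
qed

end
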